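(* Let $A\in\mathbb R^{m\times n}$, $W\in\mathbb R^{k\times n}$ and $\alpha>0$. For $y\in\mathbb R^m$ let $\hat x(y)\subset\mathbb R^n$ be the set of minimizers of $x\mapsto\|Ax-y\|_2^2+\alpha\|Wx\|_1$. Then the set-valued map $y\mapsto\hat x(y)$ is Hausdorff Lipschitz continuous: there exists $\kappa>0$ such that $$\hat x(\tilde y)\subset\hat x(y)+\kappa\|y-\tilde y\|_2\,B_1(0)\qquad\text{for all }y,\tilde y\in\mathbb R^m.$$
   Context: $B_1(0)$ denotes the closed Euclidean unit ball in $\mathbb R^n$; $\|\cdot\|_1$ and $\|\cdot\|_2$ denote the $\ell^1$- and Euclidean norms. *)

theory Defs
  imports "HOL-Analysis.Analysis"
begin

definition l1norm :: "real ^ 'k \<Rightarrow> real" where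
  "l1norm v = (\<Sum>i\<in>UNIV. \<bar>v $ i\<bar>)"

definition lasso_obj ::
  "real ^ 'n ^ 'm \<Rightarrow> real ^ 'n ^ 'k \<Rightarrow> real \<Rightarrow> real ^ 'm \<Rightarrow> real ^ 'n \<Rightarrow> real" where
  "lasso_obj A W \<alpha> y x = (norm (A *v x - y))\<^sup>2 + \<alpha> * l1norm (W *v x)"

definition lasso_minimizers ::
  "real ^ 'n ^ 'm \<Rightarrow> real ^ 'n ^ 'k \<Rightarrow> real \<Rightarrow> real ^ 'm \<Rightarrow> (real ^ 'n) set" where
  "lasso_minimizers A W \<alpha> y = {x. \<forall>z. lasso_obj A W \<alpha> y x \<le> lasso_obj A W \<alpha> y z}"

end

theory Submission
  imports Defs
begin

(* If x minimizes the functional for y, every z with A z = A x and |W z|_1 <= |W x|_1 is a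
   minimizer as well, so it suffices to bound the residuals of a minimizer x' for y' with
   respect to this polyhedron and to invoke Hoffman's error bound.  The fit residual
   |A x' - A x| is at most |y - y'| by monotonicity of the subdifferential.  For the penalty
   residual, pick e with A e = A x' - A x and |e| <= C |A x' - A x|: then x + e fits y' as
   well as x' does, so optimality of x' gives |W x'|_1 <= |W (x + e)|_1 <= |W x|_1 + O(|e|). *)

lemma polar_cone_violation_pos:
  fixes a :: "'i \<Rightarrow> 'v::real_inner"
  assumes "finite J" "d \<noteq> 0" and "\<And>v. \<forall>i\<in>J. a i \<bullet> v \<le> 0 \<Longrightarrow> d \<bullet> v \<le> 0"
  shows "(\<Sum>i\<in>J. max 0 (a i \<bullet> d)) > 0"
proof (rule ccontr)
  assume "\<not> (\<Sum>i\<in>J. max 0 (a i \<bullet> d)) > 0"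
  then have "\<forall>i\<in>J. max 0 (a i \<bullet> d) = 0"
    using sum_nonneg_eq_0_iff[OF assms(1), of "\<lambda>i. max 0 (a i \<bullet> d)"] sum_nonneg[of J "\<lambda>i. max 0 (a i \<bullet> d)"]
    by simp
  then have "d \<bullet> d \<le> 0"
    by (intro assms(3)) (metis max.cobounded2)
  with \<open>d \<noteq> 0\<close> show False
    by (metis inner_gt_zero_iff not_le)
qed

lemma polar_cone_norm_bound:
  fixes a :: "'i \<Rightarrow> 'v::euclidean_space"
  assumes "finite J"
  shows "\<exists>c>0. \<forall>d. (\<forall>v. (\<forall>i\<in>J. a i \<bullet> v \<le> 0) \<longrightarrow> d \<bullet> v \<le> 0) \<longrightarrow>
           norm d \<le> c * (\<Sum>i\<in>J. max 0 (a i \<bullet> d))"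
proof -
  define N where "N = {d. \<forall>v. (\<forall>i\<in>J. a i \<bullet> v \<le> 0) \<longrightarrow> d \<bullet> v \<le> 0}"
  define G where "G d = (\<Sum>i\<in>J. max 0 (a i \<bullet> d))" for d
  define S where "S = N \<inter> sphere 0 1"
  have "N = (\<Inter>v\<in>{v. \<forall>i\<in>J. a i \<bullet> v \<le> 0}. {d. v \<bullet> d \<le> 0})"
    by (auto simp: N_def inner_commute)
  then have "closed N"
    by (auto intro!: closed_halfspace_le)
  then have "compact S"
    unfolding S_def by (intro closed_Int_compact compact_sphere)
  have G_pos: "G d > 0" if "d \<in> N" "d \<noteq> 0" for d
    using polar_cone_violation_pos[OF assms \<open>d \<noteq> 0\<close>] that by (auto simp: G_def N_def)
  obtain c where "c > 0" and c: "\<And>d. d \<in> S \<Longrightarrow> 1 \<le> c * G d"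
  proof (cases "S = {}")
    case False
    have "continuous_on S G"
      unfolding G_def by (intro continuous_intros)
    then obtain d0 where "d0 \<in> S" and d0: "\<And>d. d \<in> S \<Longrightarrow> G d0 \<le> G d"
      using continuous_attains_inf[OF \<open>compact S\<close> False] by blast
    then have "G d0 > 0"
      by (intro G_pos) (auto simp: S_def)
    then show ?thesis
      using d0 by (intro that[of "1 / G d0"]) (auto simp: field_simps)
  qed (use that[of 1] in auto)
  have "norm d \<le> c * G d" if "d \<in> N" for d
  proof (cases "d = 0")
    case True
    then show ?thesis
      using \<open>c > 0\<close> by (simp add: G_def sum_nonneg)
  next
    case False
    have "(1 / norm d) *\<^sub>R d \<in> S"
      using that False by (auto simp: S_def N_def intro!: divide_nonpos_nonneg)
    then have "1 \<le> c * G ((1 / norm d) *\<^sub>R d)"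
      by (rule c)
    also have "G ((1 / norm d) *\<^sub>R d) = G d / norm d"
      unfolding G_def sum_divide_distrib
      by (intro sum.cong refl) (use False in \<open>auto simp: max_def field_simps\<close>)
    finally show ?thesis
      using False by (simp add: field_simps)
  qed
  then show ?thesis
    using \<open>c > 0\<close> by (intro exI[of _ c]) (auto simp: N_def G_def)
qed

lemma closest_point_polyhedron_polar:
  fixes a :: "'i::finite \<Rightarrow> 'v::euclidean_space" and b :: "'i \<Rightarrow> real"
  defines "P \<equiv> {z. \<forall>i. a i \<bullet> z \<le> b i}"
  assumes "P \<noteq> {}"
    and "\<And>i. a i \<bullet> closest_point P x = b i \<Longrightarrow> a i \<bullet> v \<le> 0"
  shows "(x - closest_point P x) \<bullet> v \<le> 0"
proof -
  define z where "z = closest_point P x"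
  have "P = (\<Inter>i. {z. a i \<bullet> z \<le> b i})"
    by (auto simp: P_def)
  then have "closed P" "convex P"
    by (auto intro!: closed_halfspace_le convex_INT convex_halfspace_le)
  have "z \<in> P"
    unfolding z_def using closest_point_in_set[OF \<open>closed P\<close> assms(2)] .
  have "\<forall>\<^sub>F t in at_right 0. a i \<bullet> (z + t *\<^sub>R v) \<le> b i" for i
  proof (cases "a i \<bullet> z = b i")
    case True
    then show ?thesis
      using assms(3)[of i] eventually_at_right_less[of 0]
      by (auto simp: z_def inner_add_right mult_nonneg_nonpos elim!: eventually_mono)
  next
    case False
    with \<open>z \<in> P\<close> have "a i \<bullet> z < b i"
      by (auto simp: P_def less_le)
    moreover have "((\<lambda>t. a i \<bullet> (z + t *\<^sub>R v)) \<longlongrightarrow> a i \<bullet> (z + 0 *\<^sub>R v)) (at_right 0)"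
      by (intro tendsto_intros)
    ultimately show ?thesis
      by (auto dest: order_tendstoD(2) elim!: eventually_mono)
  qed
  then have "\<forall>\<^sub>F t in at_right 0. t > 0 \<and> z + t *\<^sub>R v \<in> P"
    unfolding P_def mem_Collect_eq
    by (intro eventually_conj eventually_at_right_less eventually_all_finite) auto
  then obtain t :: real where "t > 0" "z + t *\<^sub>R v \<in> P"
    using eventually_happens'[OF trivial_limit_at_right_real] by blast
  then have "(x - z) \<bullet> (t *\<^sub>R v) \<le> 0"
    using closest_point_dot[OF \<open>convex P\<close> \<open>closed P\<close>, of "z + t *\<^sub>R v" x] by (simp add: z_def)
  with \<open>t > 0\<close> show ?thesis
    by (simp add: z_def mult_le_0_iff)
qed

lemma hoffman_error_bound:
  fixes a :: "'i::finite \<Rightarrow> 'v::euclidean_space"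
  shows "\<exists>H>0. \<forall>b x. (\<exists>z. \<forall>i. a i \<bullet> z \<le> b i) \<longrightarrow>
           (\<exists>z. (\<forall>i. a i \<bullet> z \<le> b i) \<and> norm (x - z) \<le> H * (\<Sum>i\<in>UNIV. max 0 (a i \<bullet> x - b i)))"
proof -
  obtain c where c_pos: "\<And>J. c J > 0" and c: "\<And>J d. (\<forall>v. (\<forall>i\<in>J. a i \<bullet> v \<le> 0) \<longrightarrow> d \<bullet> v \<le> 0) \<Longrightarrow>
      norm d \<le> c J * (\<Sum>i\<in>J. max 0 (a i \<bullet> d))"
    using polar_cone_norm_bound[OF finite, of _ a] by metis
  \<comment> \<open>one constant for each of the finitely many active sets\<close>
  define H where "H = (\<Sum>J\<in>UNIV. c J)"
  have "c J \<le> H" for J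
    unfolding H_def by (rule member_le_sum) (auto intro: less_imp_le c_pos)
  have "H > 0"
    unfolding H_def using c_pos by (intro sum_pos) auto
  moreover have "\<exists>z. (\<forall>i. a i \<bullet> z \<le> b i) \<and> norm (x - z) \<le> H * (\<Sum>i\<in>UNIV. max 0 (a i \<bullet> x - b i))"
    if "\<exists>z. \<forall>i. a i \<bullet> z \<le> b i" for b x
  proof -
    define P where "P = {z. \<forall>i. a i \<bullet> z \<le> b i}"
    define z where "z = closest_point P x"
    define J where "J = {i. a i \<bullet> z = b i}"
    have "P = (\<Inter>i. {z. a i \<bullet> z \<le> b i})"
      by (auto simp: P_def)
    then have "closed P"
      by (auto intro!: closed_halfspace_le)
    have "P \<noteq> {}"
      using that by (auto simp: P_def)
    then have "z \<in> P"
      unfolding z_def using \<open>closed P\<close> by (rule closest_point_in_set[rotated])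
    have "norm (x - z) \<le> c J * (\<Sum>i\<in>J. max 0 (a i \<bullet> (x - z)))"
      using closest_point_polyhedron_polar[of a b] \<open>P \<noteq> {}\<close>
      by (intro c) (auto simp: P_def z_def J_def)
    also have "(\<Sum>i\<in>J. max 0 (a i \<bullet> (x - z))) = (\<Sum>i\<in>J. max 0 (a i \<bullet> x - b i))"
      by (intro sum.cong refl) (auto simp: J_def inner_diff_right)
    also have "\<dots> \<le> (\<Sum>i\<in>UNIV. max 0 (a i \<bullet> x - b i))"
      by (intro sum_mono2) auto
    also have "c J * \<dots> \<le> H * \<dots>"
      by (intro mult_right_mono \<open>c J \<le> H\<close> sum_nonneg) auto
    finally show ?thesis
      using \<open>z \<in> P\<close> c_pos[of J] by (auto simp: P_def mult_left_mono)
  qed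
  ultimately show ?thesis
    by blast
qed

lemma l1norm_nonneg: "l1norm v \<ge> 0"
  unfolding l1norm_def by (intro sum_nonneg) auto

lemma l1norm_zero [simp]: "l1norm 0 = 0"
  unfolding l1norm_def by simp

lemma l1norm_triangle: "l1norm (u + v) \<le> l1norm u + l1norm v"
  unfolding l1norm_def sum.distrib[symmetric] by (intro sum_mono) (simp add: abs_triangle_ineq)

lemma l1norm_scaleR: "l1norm (c *\<^sub>R v) = \<bar>c\<bar> * l1norm v"
  unfolding l1norm_def by (simp add: sum_distrib_left abs_mult)

lemma l1norm_le_card_norm: "l1norm (v :: real ^ 'k) \<le> CARD('k) * norm v"
proof -
  have "l1norm v \<le> (\<Sum>i\<in>(UNIV::'k set). norm v)"
    unfolding l1norm_def by (intro sum_mono component_le_norm_cart)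
  then show ?thesis
    by simp
qed

lemma l1norm_matrix_vector_bound:
  fixes W :: "real ^ 'n ^ 'k"
  obtains B where "B > 0" "\<And>x. l1norm (W *v x) \<le> B * norm x"
proof -
  obtain B where "B > 0" and B: "\<And>x. norm (W *v x) \<le> norm x * B"
    using bounded_linear.pos_bounded[OF matrix_vector_mul_bounded_linear[of W]] by blast
  have "l1norm (W *v x) \<le> CARD('k) * norm (W *v x)" for x
    by (rule l1norm_le_card_norm)
  also have "\<dots> x \<le> (CARD('k) * B) * norm x" for x
    using mult_left_mono[OF B[of x], of "CARD('k)"] by (simp add: algebra_simps)
  finally have "l1norm (W *v x) \<le> (CARD('k) * B) * norm x" for x .
  then show ?thesis
    using \<open>B > 0\<close> by (intro that[of "CARD('k) * B"]) auto
qed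

text \<open>The level set \<open>{z. A z = p \<and> \<parallel>W z\<parallel>\<^sub>1 \<le> c}\<close> is a polyhedron: it is cut out by
  \<open>\<plusminus>(A z)\<^sub>i \<le> \<plusminus>p\<^sub>i\<close> and, for every sign pattern \<open>s\<close> (encoded by the set where \<open>s = 1\<close>),
  by \<open>\<Sum>\<^sub>j s\<^sub>j (W z)\<^sub>j \<le> c\<close>.\<close>

definition set_sign :: "'k set \<Rightarrow> 'k \<Rightarrow> real" where
  "set_sign S j = (if j \<in> S then 1 else -1)"

fun lasso_ineq_normal :: "real ^ 'n ^ 'm \<Rightarrow> real ^ 'n ^ 'k \<Rightarrow> ('m \<times> bool) + 'k set \<Rightarrow> real ^ 'n" where
  "lasso_ineq_normal A W (Inl (i, True)) = A $ i"
| "lasso_ineq_normal A W (Inl (i, False)) = - (A $ i)"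
| "lasso_ineq_normal A W (Inr S) = (\<Sum>j\<in>UNIV. set_sign S j *\<^sub>R W $ j)"

fun lasso_ineq_bound :: "real ^ 'm \<Rightarrow> real \<Rightarrow> ('m \<times> bool) + 'k set \<Rightarrow> real" where
  "lasso_ineq_bound p c (Inl (i, True)) = p $ i"
| "lasso_ineq_bound p c (Inl (i, False)) = - (p $ i)"
| "lasso_ineq_bound p c (Inr S) = c"

lemma lasso_ineq_normal_Inr:
  "lasso_ineq_normal A W (Inr S) \<bullet> x = (\<Sum>j\<in>UNIV. set_sign S j * (W *v x) $ j)"
  by (simp add: inner_sum_left matrix_vector_mul_component)

lemma lasso_ineq_normal_Inr_le: "lasso_ineq_normal A W (Inr S) \<bullet> x \<le> l1norm (W *v x)"
  unfolding lasso_ineq_normal_Inr l1norm_def by (intro sum_mono) (auto simp: set_sign_def)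

lemma lasso_ineq_normal_Inr_sign:
  "lasso_ineq_normal A W (Inr {j. (W *v x) $ j \<ge> 0}) \<bullet> x = l1norm (W *v x)"
  unfolding lasso_ineq_normal_Inr l1norm_def by (intro sum.cong refl) (auto simp: set_sign_def)

lemma lasso_ineq_iff:
  "(\<forall>i. lasso_ineq_normal A W i \<bullet> z \<le> lasso_ineq_bound p c i) \<longleftrightarrow>
     A *v z = p \<and> l1norm (W *v z) \<le> c"
proof
  assume ineq: "\<forall>i. lasso_ineq_normal A W i \<bullet> z \<le> lasso_ineq_bound p c i"
  have "(A *v z) $ i = p $ i" for i
    using ineq[rule_format, of "Inl (i, True)"] ineq[rule_format, of "Inl (i, False)"]
    by (simp add: matrix_vector_mul_component)
  moreover have "l1norm (W *v z) \<le> c"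
    using ineq[rule_format, of "Inr {j. (W *v z) $ j \<ge> 0}"] lasso_ineq_normal_Inr_sign[of A W z]
    by simp
  ultimately show "A *v z = p \<and> l1norm (W *v z) \<le> c"
    by (simp add: vec_eq_iff)
next
  assume z: "A *v z = p \<and> l1norm (W *v z) \<le> c"
  show "\<forall>i. lasso_ineq_normal A W i \<bullet> z \<le> lasso_ineq_bound p c i"
  proof
    fix i
    show "lasso_ineq_normal A W i \<bullet> z \<le> lasso_ineq_bound p c i"
      using z lasso_ineq_normal_Inr_le[of A W _ z]
      by (cases "(A, W, i)" rule: lasso_ineq_normal.cases)
        (auto simp: matrix_vector_mul_component[symmetric] intro: order.trans)
  qed
qed

lemma lasso_ineq_residual_le:
  fixes A :: "real ^ 'n ^ 'm" and W :: "real ^ 'n ^ 'k"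
  shows "(\<Sum>i\<in>UNIV. max 0 (lasso_ineq_normal A W i \<bullet> x - lasso_ineq_bound p c i)) \<le>
     CARD('m) * norm (A *v x - p) + CARD('k set) * max 0 (l1norm (W *v x) - c)"
proof -
  define F where "F i = max 0 (lasso_ineq_normal A W i \<bullet> x - lasso_ineq_bound p c i)" for i
  have "(\<Sum>i\<in>UNIV. F i) = (\<Sum>ib\<in>UNIV. F (Inl ib)) + (\<Sum>S\<in>UNIV. F (Inr S))"
    by (subst UNIV_Plus_UNIV[symmetric], subst sum.Plus) auto
  also have "(\<Sum>ib\<in>UNIV. F (Inl ib)) = (\<Sum>i\<in>UNIV. \<Sum>b\<in>UNIV. F (Inl (i, b)))"
    unfolding sum.cartesian_product by (simp add: case_prod_unfold)
  also have "\<dots> = l1norm (A *v x - p)"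
    unfolding l1norm_def UNIV_bool
    by (intro sum.cong refl) (auto simp: F_def matrix_vector_mul_component max_def)
  also have "\<dots> \<le> CARD('m) * norm (A *v x - p)"
    by (rule l1norm_le_card_norm)
  also have "(\<Sum>S\<in>UNIV. F (Inr S)) \<le> (\<Sum>S\<in>(UNIV :: 'k set set). max 0 (l1norm (W *v x) - c))"
    unfolding F_def using lasso_ineq_normal_Inr_le[of A W _ x]
    by (intro sum_mono max.mono) auto
  finally show ?thesis
    by (simp add: F_def)
qed

lemma lasso_level_set_error_bound:
  fixes A :: "real ^ 'n ^ 'm" and W :: "real ^ 'n ^ 'k"
  obtains H where "H > 0"
    "\<And>p c x. \<exists>z. A *v z = p \<and> l1norm (W *v z) \<le> c \<Longrightarrow>
       \<exists>z. A *v z = p \<and> l1norm (W *v z) \<le> c \<and>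
         norm (x - z) \<le> H * (norm (A *v x - p) + max 0 (l1norm (W *v x) - c))"
proof -
  obtain H where "H > 0" and H: "\<And>b x. \<exists>z. \<forall>i. lasso_ineq_normal A W i \<bullet> z \<le> b i \<Longrightarrow>
      \<exists>z. (\<forall>i. lasso_ineq_normal A W i \<bullet> z \<le> b i) \<and>
        norm (x - z) \<le> H * (\<Sum>i\<in>UNIV. max 0 (lasso_ineq_normal A W i \<bullet> x - b i))"
    using hoffman_error_bound[of "lasso_ineq_normal A W"] by blast
  define M :: real where "M = CARD('m) + CARD('k set)"
  have "M > 0"
    by (simp add: M_def add_pos_nonneg)
  show ?thesis
  proof (rule that[of "H * M"])
    fix p c x
    assume "\<exists>z. A *v z = p \<and> l1norm (W *v z) \<le> c"
    then obtain z where z: "A *v z = p \<and> l1norm (W *v z) \<le> c"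
      and dist: "norm (x - z) \<le> H * (\<Sum>i\<in>UNIV. max 0 (lasso_ineq_normal A W i \<bullet> x - lasso_ineq_bound p c i))"
      using H[of "lasso_ineq_bound p c" x] by (auto simp: lasso_ineq_iff)
    have "CARD('m) * norm (A *v x - p) + CARD('k set) * max 0 (l1norm (W *v x) - c) \<le>
        M * (norm (A *v x - p) + max 0 (l1norm (W *v x) - c))"
      by (simp add: M_def algebra_simps)
    with dist lasso_ineq_residual_le[of A W x p c] \<open>H > 0\<close>
    have "norm (x - z) \<le> H * M * (norm (A *v x - p) + max 0 (l1norm (W *v x) - c))"
      by (smt (verit, best) mult.assoc mult_left_mono)
    with z show "\<exists>z. A *v z = p \<and> l1norm (W *v z) \<le> c \<and>
        norm (x - z) \<le> H * M * (norm (A *v x - p) + max 0 (l1norm (W *v x) - c))"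
      by blast
  qed (use \<open>H > 0\<close> \<open>M > 0\<close> in simp)
qed

lemma lasso_bounded_representative:
  fixes A :: "real ^ 'n ^ 'm" and W :: "real ^ 'n ^ 'k"
  obtains C where "C > 0"
    "\<And>w. \<exists>z. A *v z = A *v w \<and> l1norm (W *v z) \<le> l1norm (W *v w) \<and> norm z \<le> C * norm (A *v w)"
proof -
  obtain H where "H > 0" and H: "\<And>p c x. \<exists>z. A *v z = p \<and> l1norm (W *v z) \<le> c \<Longrightarrow>
      \<exists>z. A *v z = p \<and> l1norm (W *v z) \<le> c \<and>
        norm (x - z) \<le> H * (norm (A *v x - p) + max 0 (l1norm (W *v x) - c))"
    using lasso_level_set_error_bound by blast
  have "\<exists>z. A *v z = A *v w \<and> l1norm (W *v z) \<le> l1norm (W *v w) \<and> norm z \<le> H * norm (A *v w)" for w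
    using H[of "A *v w" "l1norm (W *v w)" 0, OF exI[of _ w]] l1norm_nonneg[of "W *v w"]
    by (simp add: max_absorb1)
  with \<open>H > 0\<close> show ?thesis
    using that by blast
qed

lemma lasso_minimizer_directional:
  assumes "\<alpha> \<ge> 0" and x: "x \<in> lasso_minimizers A W \<alpha> y"
  shows "0 \<le> 2 * ((A *v x - y) \<bullet> (A *v e)) + \<alpha> * (l1norm (W *v (x + e)) - l1norm (W *v x))"
    (is "0 \<le> ?Q")
proof -
  define r where "r = A *v x - y"
  have "0 \<le> ?Q + t * norm (A *v e) ^ 2" if "0 < t" "t \<le> 1" for t
  proof -
    have "A *v (x + t *\<^sub>R e) - y = r + t *\<^sub>R (A *v e)"
      by (simp add: r_def algebra_simps)
    moreover have "norm (r + t *\<^sub>R (A *v e)) ^ 2 =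
        norm r ^ 2 + 2 * t * (r \<bullet> (A *v e)) + t * (t * norm (A *v e) ^ 2)"
      unfolding power2_norm_eq_inner
      by (simp add: inner_commute[of "A *v e" r] algebra_simps)
    moreover have "W *v (x + t *\<^sub>R e) = (1 - t) *\<^sub>R (W *v x) + t *\<^sub>R (W *v (x + e))"
      by (simp add: algebra_simps)
    then have "l1norm (W *v (x + t *\<^sub>R e)) \<le> (1 - t) * l1norm (W *v x) + t * l1norm (W *v (x + e))"
      using l1norm_triangle l1norm_scaleR that by (metis abs_of_nonneg diff_ge_0_iff_ge less_imp_le)
    moreover have "lasso_obj A W \<alpha> y x \<le> lasso_obj A W \<alpha> y (x + t *\<^sub>R e)"
      using x by (simp add: lasso_minimizers_def)
    ultimately have "norm r ^ 2 + \<alpha> * l1norm (W *v x) \<le> norm r ^ 2 + 2 * t * (r \<bullet> (A *v e)) +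
        t * (t * norm (A *v e) ^ 2) + \<alpha> * ((1 - t) * l1norm (W *v x) + t * l1norm (W *v (x + e)))"
      using \<open>\<alpha> \<ge> 0\<close> unfolding lasso_obj_def r_def by (smt (verit) mult_left_mono)
    then have "0 \<le> t * (?Q + t * norm (A *v e) ^ 2)"
      by (simp add: r_def algebra_simps)
    with \<open>t > 0\<close> show ?thesis
      by (simp add: zero_le_mult_iff)
  qed
  moreover have "\<forall>\<^sub>F t in at_right (0::real). 0 < t \<and> t \<le> 1"
    unfolding eventually_at_right_field by (intro exI[of _ 1]) auto
  ultimately have "\<forall>\<^sub>F t in at_right 0. 0 \<le> ?Q + t * norm (A *v e) ^ 2"
    by (auto elim: eventually_mono)
  moreover have "((\<lambda>t. ?Q + t * norm (A *v e) ^ 2) \<longlongrightarrow> ?Q + 0 * norm (A *v e) ^ 2) (at_right 0)"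
    by (intro tendsto_intros)
  ultimately show ?thesis
    by (auto intro: tendsto_lowerbound)
qed

lemma lasso_minimizers_fit_lipschitz:
  assumes "\<alpha> \<ge> 0" and x: "x \<in> lasso_minimizers A W \<alpha> y" and x': "x' \<in> lasso_minimizers A W \<alpha> y'"
  shows "norm (A *v x' - A *v x) \<le> norm (y' - y)"
proof -
  define D where "D = A *v x' - A *v x"
  have "0 \<le> 2 * ((A *v x - y) \<bullet> D) + \<alpha> * (l1norm (W *v x') - l1norm (W *v x))"
    using lasso_minimizer_directional[OF \<open>\<alpha> \<ge> 0\<close> x, of "x' - x"]
    by (simp add: D_def matrix_vector_mult_diff_distrib)
  moreover have "0 \<le> 2 * ((A *v x' - y') \<bullet> (- D)) + \<alpha> * (l1norm (W *v x) - l1norm (W *v x'))"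
    using lasso_minimizer_directional[OF \<open>\<alpha> \<ge> 0\<close> x', of "x - x'"]
    by (simp add: D_def matrix_vector_mult_diff_distrib)
  ultimately have "0 \<le> (A *v x - y) \<bullet> D + (A *v x' - y') \<bullet> (- D)"
    by (simp add: algebra_simps)
  also have "\<dots> = (y' - y) \<bullet> D - D \<bullet> D"
    by (simp add: D_def algebra_simps)
  finally have "norm D * norm D \<le> (y' - y) \<bullet> D"
    by (simp add: power2_norm_eq_inner[symmetric] power2_eq_square)
  also have "\<dots> \<le> norm (y' - y) * norm D"
    by (rule norm_cauchy_schwarz)
  finally show ?thesis
    unfolding D_def[symmetric] by (cases "D = 0") auto
qed

lemma lasso_minimizer_l1norm_le:
  assumes "\<alpha> > 0" and x: "x \<in> lasso_minimizers A W \<alpha> y" and "A *v z = A *v x"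
  shows "l1norm (W *v x) \<le> l1norm (W *v z)"
  using x[unfolded lasso_minimizers_def, simplified, rule_format, of z] assms
  by (simp add: lasso_obj_def)

lemma lasso_minimizersI:
  assumes "\<alpha> \<ge> 0" and x: "x \<in> lasso_minimizers A W \<alpha> y"
    and "A *v z = A *v x" "l1norm (W *v z) \<le> l1norm (W *v x)"
  shows "z \<in> lasso_minimizers A W \<alpha> y"
proof -
  have "lasso_obj A W \<alpha> y z \<le> lasso_obj A W \<alpha> y x"
    using assms by (simp add: lasso_obj_def mult_left_mono)
  with x show ?thesis
    by (auto simp: lasso_minimizers_def intro: order.trans)
qed

lemma continuous_on_lasso_obj: "continuous_on S (lasso_obj A W \<alpha> y)"
  unfolding lasso_obj_def[abs_def] l1norm_def
  by (intro continuous_intros linear_continuous_on matrix_vector_mul_bounded_linear)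

lemma lasso_obj_improve_in_cball:
  fixes A :: "real ^ 'n ^ 'm" and W :: "real ^ 'n ^ 'k"
  assumes "\<alpha> \<ge> 0"
  obtains R where "R \<ge> 0"
    "\<And>w. lasso_obj A W \<alpha> y w \<le> lasso_obj A W \<alpha> y 0 \<Longrightarrow>
       \<exists>z\<in>cball 0 R. lasso_obj A W \<alpha> y z \<le> lasso_obj A W \<alpha> y w"
proof -
  obtain C where "C > 0" and C: "\<And>w. \<exists>z. A *v z = A *v w \<and> l1norm (W *v z) \<le> l1norm (W *v w) \<and>
      norm z \<le> C * norm (A *v w)"
    using lasso_bounded_representative by blast
  define f where "f = lasso_obj A W \<alpha> y"
  define R where "R = C * (2 * norm y)"
  have "\<exists>z\<in>cball 0 R. f z \<le> f w" if "f w \<le> f 0" for w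
  proof -
    have "f 0 = norm y ^ 2"
      by (simp add: f_def lasso_obj_def)
    then have "norm (A *v w - y) ^ 2 \<le> norm y ^ 2"
      using that mult_nonneg_nonneg[OF \<open>\<alpha> \<ge> 0\<close> l1norm_nonneg[of "W *v w"]]
      unfolding f_def lasso_obj_def by linarith
    then have "norm (A *v w - y) \<le> norm y"
      by (rule power2_le_imp_le) simp
    then have "norm (A *v w) \<le> 2 * norm y"
      using norm_triangle_sub[of "A *v w" y] by linarith
    obtain z where z: "A *v z = A *v w" "l1norm (W *v z) \<le> l1norm (W *v w)"
      and "norm z \<le> C * norm (A *v w)"
      using C by blast
    then have "norm z \<le> R"
      using mult_left_mono[OF \<open>norm (A *v w) \<le> 2 * norm y\<close>, of C] \<open>C > 0\<close>
      unfolding R_def by linarith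
    moreover have "f z \<le> f w"
      using z \<open>\<alpha> \<ge> 0\<close> by (simp add: f_def lasso_obj_def mult_left_mono)
    ultimately show ?thesis
      by auto
  qed
  moreover have "R \<ge> 0"
    using \<open>C > 0\<close> by (simp add: R_def)
  ultimately show ?thesis
    using that unfolding f_def by blast
qed

lemma lasso_minimizers_nonempty:
  fixes A :: "real ^ 'n ^ 'm" and W :: "real ^ 'n ^ 'k"
  assumes "\<alpha> \<ge> 0"
  shows "lasso_minimizers A W \<alpha> y \<noteq> {}"
proof -
  define f where "f = lasso_obj A W \<alpha> y"
  obtain R where "R \<ge> 0" and improve: "\<And>w. f w \<le> f 0 \<Longrightarrow> \<exists>z\<in>cball 0 R. f z \<le> f w"
    using lasso_obj_improve_in_cball[OF assms] unfolding f_def by blast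
  then have "cball (0 :: real ^ 'n) R \<noteq> {}"
    by simp
  then obtain x where x: "\<And>z. z \<in> cball 0 R \<Longrightarrow> f x \<le> f z"
    using continuous_attains_inf[OF compact_cball _ continuous_on_lasso_obj]
    unfolding f_def by blast
  have "f x \<le> f w" for w
  proof (cases "f w \<le> f 0")
    case True
    then obtain z where "z \<in> cball 0 R" "f z \<le> f w"
      using improve by blast
    with x[of z] show ?thesis
      by linarith
  next
    case False
    with x[of 0] \<open>R \<ge> 0\<close> show ?thesis
      by simp
  qed
  then show ?thesis
    by (auto simp: lasso_minimizers_def f_def)
qed

lemma lasso_minimizers_penalty_lipschitz:
  fixes A :: "real ^ 'n ^ 'm" and W :: "real ^ 'n ^ 'k"
  assumes "\<alpha> > 0"
  obtains L where "L \<ge> 0"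
    "\<And>y y' x x'. x \<in> lasso_minimizers A W \<alpha> y \<Longrightarrow> x' \<in> lasso_minimizers A W \<alpha> y' \<Longrightarrow>
       l1norm (W *v x') - l1norm (W *v x) \<le> L * norm (y' - y)"
proof -
  obtain C where "C > 0" and C: "\<And>w. \<exists>z. A *v z = A *v w \<and> l1norm (W *v z) \<le> l1norm (W *v w) \<and>
      norm z \<le> C * norm (A *v w)"
    using lasso_bounded_representative by blast
  obtain B where "B > 0" and B: "\<And>x. l1norm (W *v x) \<le> B * norm x"
    using l1norm_matrix_vector_bound by blast
  have "l1norm (W *v x') - l1norm (W *v x) \<le> B * C * norm (y' - y)"
    if x: "x \<in> lasso_minimizers A W \<alpha> y" and x': "x' \<in> lasso_minimizers A W \<alpha> y'" for y y' x x'
  proof -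
    obtain e where e: "A *v e = A *v x' - A *v x" and "norm e \<le> C * norm (A *v x' - A *v x)"
      using C[of "x' - x"] by (auto simp: matrix_vector_mult_diff_distrib)
    have "l1norm (W *v x') \<le> l1norm (W *v (x + e))"
      using e by (intro lasso_minimizer_l1norm_le[OF \<open>\<alpha> > 0\<close> x']) (simp add: matrix_vector_right_distrib)
    also have "\<dots> \<le> l1norm (W *v x) + B * norm e"
      using l1norm_triangle[of "W *v x" "W *v e"] B[of e] by (simp add: matrix_vector_right_distrib)
    also have "B * norm e \<le> B * (C * norm (y' - y))"
      using \<open>norm e \<le> _\<close> lasso_minimizers_fit_lipschitz[OF _ x x'] \<open>\<alpha> > 0\<close> \<open>B > 0\<close> \<open>C > 0\<close>
      by (smt (verit) mult_left_mono)
    finally show ?thesis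
      by (simp add: algebra_simps)
  qed
  with \<open>B > 0\<close> \<open>C > 0\<close> show ?thesis
    using that[of "B * C"] by simp
qed

lemma norm_le_in_scaled_cball:
  fixes v :: "'a::real_normed_vector"
  assumes "norm v \<le> r"
  shows "v \<in> (\<lambda>u. r *\<^sub>R u) ` cball 0 1"
proof (cases "r = 0")
  case True
  with assms show ?thesis
    by (auto intro: image_eqI[of _ _ 0])
next
  case False
  with assms show ?thesis
    by (simp add: cball_scale)
qed

lemma lasso_minimizers_lipschitz_dist:
  fixes A :: "real ^ 'n ^ 'm" and W :: "real ^ 'n ^ 'k"
  assumes "\<alpha> > 0"
  obtains \<kappa> where "\<kappa> > 0"
    "\<And>y y' x'. x' \<in> lasso_minimizers A W \<alpha> y' \<Longrightarrow>
       \<exists>z\<in>lasso_minimizers A W \<alpha> y. norm (x' - z) \<le> \<kappa> * norm (y - y')"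
proof -
  have "\<alpha> \<ge> 0"
    using assms by simp
  obtain H where "H > 0" and H: "\<And>p c x. \<exists>z. A *v z = p \<and> l1norm (W *v z) \<le> c \<Longrightarrow>
      \<exists>z. A *v z = p \<and> l1norm (W *v z) \<le> c \<and>
        norm (x - z) \<le> H * (norm (A *v x - p) + max 0 (l1norm (W *v x) - c))"
    using lasso_level_set_error_bound by blast
  obtain L where "L \<ge> 0" and L: "\<And>y y' x x'. x \<in> lasso_minimizers A W \<alpha> y \<Longrightarrow>
      x' \<in> lasso_minimizers A W \<alpha> y' \<Longrightarrow> l1norm (W *v x') - l1norm (W *v x) \<le> L * norm (y' - y)"
    using lasso_minimizers_penalty_lipschitz[OF assms] by blast
  have "\<exists>z\<in>lasso_minimizers A W \<alpha> y. norm (x' - z) \<le> H * (1 + L) * norm (y - y')"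
    if x': "x' \<in> lasso_minimizers A W \<alpha> y'" for y y' x'
  proof -
    obtain x where x: "x \<in> lasso_minimizers A W \<alpha> y"
      using lasso_minimizers_nonempty[OF \<open>\<alpha> \<ge> 0\<close>] by blast
    obtain z where z: "A *v z = A *v x" "l1norm (W *v z) \<le> l1norm (W *v x)" and
      dist: "norm (x' - z) \<le> H * (norm (A *v x' - A *v x) + max 0 (l1norm (W *v x') - l1norm (W *v x)))"
      using H[of "A *v x" "l1norm (W *v x)" x'] by blast
    note dist
    also have "\<dots> \<le> H * (norm (y - y') + L * norm (y - y'))"
      using lasso_minimizers_fit_lipschitz[OF \<open>\<alpha> \<ge> 0\<close> x x'] L[OF x x'] \<open>L \<ge> 0\<close> \<open>H > 0\<close>
      by (intro mult_left_mono add_mono) (auto simp: norm_minus_commute)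
    finally have "norm (x' - z) \<le> H * (1 + L) * norm (y - y')"
      by (simp add: algebra_simps)
    moreover have "z \<in> lasso_minimizers A W \<alpha> y"
      using lasso_minimizersI[OF \<open>\<alpha> \<ge> 0\<close> x z] .
    ultimately show ?thesis
      by blast
  qed
  moreover have "H * (1 + L) > 0"
    using \<open>H > 0\<close> \<open>L \<ge> 0\<close> by simp
  ultimately show ?thesis
    using that by blast
qed

theorem proposition1:
  fixes A :: "real ^ 'n ^ 'm" and W :: "real ^ 'n ^ 'k" and \<alpha> :: real
  assumes "\<alpha> > 0"
  shows "\<exists>\<kappa>>0. \<forall>y y'. lasso_minimizers A W \<alpha> y' \<subseteq>
           {a + b | a b. a \<in> lasso_minimizers A W \<alpha> y \<and>
              b \<in> (\<lambda>u. (\<kappa> * norm (y - y')) *\<^sub>R u) ` cball 0 1}"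
proof -
  obtain \<kappa> where "\<kappa> > 0" and near: "\<And>y y' x'. x' \<in> lasso_minimizers A W \<alpha> y' \<Longrightarrow>
      \<exists>z\<in>lasso_minimizers A W \<alpha> y. norm (x' - z) \<le> \<kappa> * norm (y - y')"
    using lasso_minimizers_lipschitz_dist[OF assms] by blast
  have "x' \<in> {a + b | a b. a \<in> lasso_minimizers A W \<alpha> y \<and>
      b \<in> (\<lambda>u. (\<kappa> * norm (y - y')) *\<^sub>R u) ` cball 0 1}"
    if x': "x' \<in> lasso_minimizers A W \<alpha> y'" for y y' x'
  proof -
    obtain z where "z \<in> lasso_minimizers A W \<alpha> y" "norm (x' - z) \<le> \<kappa> * norm (y - y')"
      using near[OF x'] by blast
    then show ?thesis
      by (intro CollectI exI[of _ z] exI[of _ "x' - z"]) (auto intro: norm_le_in_scaled_cball)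
  qed
  with \<open>\<kappa> > 0\<close> show ?thesis
    by blast
qed

end
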